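(* Let $U\subset\mathbb R^n$ be open, let $X$ be a $C^\infty$ vector field on $U$ and $V:U\to\mathbb R$ a $C^\infty$ function satisfying assumptions A1, A2 and A3$'$ (stated in the context) for some $c>0$. Then every trajectory of $\dot x = X(x)-\nabla V(x)$ starting in $V^{-1}([0,c])$ stays in $V^{-1}([0,c])$ for all $t\ge0$ and converges to the set $V^{-1}(0)$ as $t\to\infty$. Moreover $V^{-1}(0)$ is an invariant set of both $\dot x=X(x)$ and $\dot x = X(x)-\nabla V(x)$.
   Context: Write $x=(x^1,\dots,x^n)$. Assumptions: (A1) $V(x)\ge0$ for all $x\in U$, $V^{-1}(0)\ne\emptyset$, and $\nabla V(x)\cdot X(x)=0$ for all $x\in U$. (A2) $c>0$ is such that $V^{-1}([0,c])$ is a compact subset of $U$. Define $X^0 g=g$, $Xg = X\cdot\nabla g$, $X^k g = X(X^{k-1}g)$ for $k\ge 2$, and $$S=\Big\{x\in U : X^k\tfrac{\partial V}{\partial x^i}(x)=0 \text{ for all } k\ge0,\ 1\le i\le n\Big\}.$$ (A3$'$) $S\cap V^{-1}([0,c])\subset V^{-1}(0)$. *)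

theory Defs
  imports "HOL-Analysis.Analysis"
begin

definition pd :: "'n::finite \<Rightarrow> (real^'n \<Rightarrow> 'b::real_normed_vector) \<Rightarrow> real^'n \<Rightarrow> 'b" where
  "pd i f x = frechet_derivative f (at x) (axis i 1)"

fun Ck_on :: "nat \<Rightarrow> (real^'n::finite) set \<Rightarrow> (real^'n \<Rightarrow> 'b::real_normed_vector) \<Rightarrow> bool" where
  "Ck_on 0 U f = continuous_on U f"
| "Ck_on (Suc k) U f = (f differentiable_on U \<and> (\<forall>i. Ck_on k U (pd i f)))"

definition smooth_on :: "(real^'n::finite) set \<Rightarrow> (real^'n \<Rightarrow> 'b::real_normed_vector) \<Rightarrow> bool" where
  "smooth_on U f = (\<forall>k. Ck_on k U f)"

definition grad :: "(real^'n::finite \<Rightarrow> real) \<Rightarrow> real^'n \<Rightarrow> real^'n" where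
  "grad V x = (\<chi> i. pd i V x)"

definition lie :: "(real^'n::finite \<Rightarrow> real^'n) \<Rightarrow> (real^'n \<Rightarrow> real) \<Rightarrow> real^'n \<Rightarrow> real" where
  "lie X g x = X x \<bullet> grad g x"

definition S_set :: "(real^'n::finite) set \<Rightarrow> (real^'n \<Rightarrow> real^'n) \<Rightarrow> (real^'n \<Rightarrow> real) \<Rightarrow> (real^'n) set" where
  "S_set U X V = {x \<in> U. \<forall>k i. ((lie X ^^ k) (pd i V)) x = 0}"

definition is_solution :: "(real^'n::finite) set \<Rightarrow> (real^'n \<Rightarrow> real^'n) \<Rightarrow> real set \<Rightarrow> (real \<Rightarrow> real^'n) \<Rightarrow> bool" where
  "is_solution U F I phi = (\<forall>t\<in>I. phi t \<in> U \<and> (phi has_vector_derivative F (phi t)) (at t within I))"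

definition invariant_set :: "(real^'n::finite) set \<Rightarrow> (real^'n \<Rightarrow> real^'n) \<Rightarrow> (real^'n) set \<Rightarrow> bool" where
  "invariant_set U F Z = (\<forall>I phi. is_interval I \<and> is_solution U F I phi \<and> (\<exists>t0\<in>I. phi t0 \<in> Z)
      \<longrightarrow> (\<forall>t\<in>I. phi t \<in> Z))"

end

theory Submission
  imports Defs
begin

(*
  Along x' = X x - grad V x one has (V o x)' = -|grad V|^2, because grad V is orthogonal to X.
  Hence the compact sublevel set K = V^-1[0,c] is forward invariant, and Picard iteration with a
  step size that is uniform on K yields solutions from K for all t >= 0.

  Along such a solution V decreases to a limit, so Barbalat's lemma gives |grad V|^2 -> 0.
  Writing X g = grad g . (X - grad V) + grad g . grad V, the first term is the time derivative of g
  along the solution, so Barbalat's lemma again shows inductively that X^k (dV/dx_i) -> 0. Every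
  cluster point of the solution therefore lies in S, hence in V^-1(0) by (A3'); this forces V -> 0
  and the distance to V^-1(0) to tend to 0.

  V^-1(0) is invariant under x' = X x since V is constant along its solutions. Under
  x' = X x - grad V x it is forward invariant because V decreases; it is backward invariant because
  a nonnegative C^2 function satisfies |grad V|^2 <= Q V on compact sets, so V can grow at most
  exponentially backwards in time.
*)

section \<open>Partial derivatives and the classes \<open>C\<^sup>k\<close>\<close>

lemma has_derivative_pd_expansion:
  fixes f :: "real^'n \<Rightarrow> 'b::real_normed_vector"
  assumes "f differentiable (at y)"
  shows "(f has_derivative (\<lambda>v. \<Sum>i\<in>UNIV. v$i *\<^sub>R pd i f y)) (at y)"
proof -
  let ?D = "frechet_derivative f (at y)"
  have D: "(f has_derivative ?D) (at y)" using assms frechet_derivative_works by blast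
  have "?D v = (\<Sum>i\<in>UNIV. v$i *\<^sub>R pd i f y)" for v
  proof -
    have "?D v = ?D (\<Sum>i\<in>UNIV. v$i *\<^sub>R axis i 1)"
      using basis_expansion[of v] by (simp add: scalar_mult_eq_scaleR)
    also have "\<dots> = (\<Sum>i\<in>UNIV. v$i *\<^sub>R pd i f y)"
      using has_derivative_linear[OF D] by (simp add: linear_sum linear_scale pd_def)
    finally show ?thesis .
  qed
  then have "?D = (\<lambda>v. \<Sum>i\<in>UNIV. v$i *\<^sub>R pd i f y)" by (rule ext)
  with D show ?thesis by simp
qed

lemma has_derivative_grad:
  fixes f :: "real^'n \<Rightarrow> real"
  assumes "f differentiable (at y)"
  shows "(f has_derivative (\<lambda>v. grad f y \<bullet> v)) (at y)"
  using has_derivative_pd_expansion[OF assms]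
  by (simp add: grad_def inner_vec_def mult.commute)

lemma pd_eq_derivative: "(f has_derivative D) (at y) \<Longrightarrow> pd i f y = D (axis i 1)"
  unfolding pd_def using frechet_derivative_at by metis

lemma pd_cong:
  assumes "open U" "y \<in> U" "\<And>z. z \<in> U \<Longrightarrow> f z = g z"
  shows "pd i f y = pd i g y"
proof -
  have "(f has_derivative D) (at y) \<longleftrightarrow> (g has_derivative D) (at y)" for D
    using has_derivative_transform_within_open[OF _ assms(1,2), of _ D UNIV] assms(3) by auto
  then show ?thesis unfolding pd_def frechet_derivative_def by simp
qed

lemma Ck_on_cong:
  assumes "open U" "\<And>z. z \<in> U \<Longrightarrow> f z = g z"
  shows "Ck_on k U f = Ck_on k U g"
  using assms(2)
proof (induction k arbitrary: f g)
  case 0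
  then show ?case using continuous_on_cong[of U U f g] by simp
next
  case (Suc k)
  have "Ck_on k U (pd i f) = Ck_on k U (pd i g)" for i
    by (rule Suc.IH) (rule pd_cong[OF assms(1)], auto simp: Suc.prems)
  moreover have "f differentiable_on U \<longleftrightarrow> g differentiable_on U"
    using Suc.prems has_derivative_transform_within_open[OF _ assms(1)]
    unfolding differentiable_on_eq_differentiable_at[OF assms(1)] differentiable_def by metis
  ultimately show ?case by simp
qed

lemma Ck_on_Suc_imp: "Ck_on (Suc k) U f \<Longrightarrow> Ck_on k U f"
  by (induction k arbitrary: f) (auto simp: differentiable_imp_continuous_on)

lemma Ck_on_imp_continuous_on: "Ck_on k U f \<Longrightarrow> continuous_on U f"
  by (cases k) (auto intro: differentiable_imp_continuous_on)

lemma Ck_on_imp_differentiable_at: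
  "open U \<Longrightarrow> Ck_on (Suc k) U f \<Longrightarrow> y \<in> U \<Longrightarrow> f differentiable (at y)"
  using differentiable_on_eq_differentiable_at by auto

lemma Ck_on_const:
  fixes U :: "(real^'n) set" and c :: "'b::real_normed_vector"
  shows "Ck_on k U (\<lambda>_. c)"
proof (induction k arbitrary: c)
  case (Suc k)
  have "pd i (\<lambda>_::real^'n. c) = (\<lambda>_. 0)" for i
    by (intro ext, subst pd_eq_derivative[of _ "\<lambda>_. 0"]) auto
  then show ?case using Suc.IH[of 0] by simp
qed simp

lemma Ck_on_add:
  fixes f g :: "real^'n \<Rightarrow> 'b::real_normed_vector"
  assumes "open U"
  shows "Ck_on k U f \<Longrightarrow> Ck_on k U g \<Longrightarrow> Ck_on k U (\<lambda>y. f y + g y)"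
proof (induction k arbitrary: f g)
  case 0
  then show ?case by (auto intro: continuous_on_add)
next
  case (Suc k)
  have "Ck_on k U (pd i (\<lambda>y. f y + g y))" for i
  proof -
    have eq: "pd i (\<lambda>y. f y + g y) y = pd i f y + pd i g y" if "y \<in> U" for y
    proof -
      have "(f has_derivative frechet_derivative f (at y)) (at y)"
        "(g has_derivative frechet_derivative g (at y)) (at y)"
        using Ck_on_imp_differentiable_at[OF assms Suc.prems(1) that]
          Ck_on_imp_differentiable_at[OF assms Suc.prems(2) that] frechet_derivative_works by blast+
      from pd_eq_derivative[OF has_derivative_add[OF this]] show ?thesis by (simp add: pd_def)
    qed
    have "Ck_on k U (\<lambda>y. pd i f y + pd i g y)"
      using Suc.IH[of "pd i f" "pd i g"] Suc.prems by simp
    then show ?thesis using Ck_on_cong[OF assms eq] by simp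
  qed
  with Suc.prems show ?case by (auto intro: differentiable_on_add)
qed

lemma Ck_on_linear:
  fixes f :: "real^'n \<Rightarrow> 'b::real_normed_vector" and L :: "'b \<Rightarrow> 'c::real_normed_vector"
  assumes "open U" "bounded_linear L"
  shows "Ck_on k U f \<Longrightarrow> Ck_on k U (\<lambda>y. L (f y))"
proof (induction k arbitrary: f)
  case 0
  then show ?case using bounded_linear.continuous_on[OF assms(2)] by simp
next
  case (Suc k)
  have D: "((\<lambda>y. L (f y)) has_derivative (\<lambda>v. L (frechet_derivative f (at y) v))) (at y within S)"
    if "y \<in> U" for y S
  proof -
    have "(f has_derivative frechet_derivative f (at y)) (at y)"
      using Ck_on_imp_differentiable_at[OF assms(1) Suc.prems that] frechet_derivative_works by blast
    from bounded_linear.has_derivative[OF assms(2) this] show ?thesis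
      by (rule has_derivative_at_withinI)
  qed
  have "Ck_on k U (pd i (\<lambda>y. L (f y)))" for i
  proof -
    have eq: "pd i (\<lambda>y. L (f y)) y = L (pd i f y)" if "y \<in> U" for y
      using pd_eq_derivative[OF D[OF that]] by (simp add: pd_def)
    have "Ck_on k U (\<lambda>y. L (pd i f y))"
      using Suc.IH[of "pd i f"] Suc.prems by simp
    then show ?thesis using Ck_on_cong[OF assms(1) eq] by simp
  qed
  moreover have "(\<lambda>y. L (f y)) differentiable_on U"
    unfolding differentiable_on_def differentiable_def using D by blast
  ultimately show ?case by simp
qed

lemma Ck_on_diff:
  fixes f g :: "real^'n \<Rightarrow> 'b::real_normed_vector"
  assumes "open U" "Ck_on k U f" "Ck_on k U g"
  shows "Ck_on k U (\<lambda>y. f y - g y)"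
  using Ck_on_add[OF assms(1,2) Ck_on_linear[OF assms(1) bounded_linear_minus[OF bounded_linear_ident] assms(3)]]
  by simp

lemma Ck_on_bilinear:
  fixes f :: "real^'n \<Rightarrow> 'a::real_normed_vector" and g :: "real^'n \<Rightarrow> 'b::real_normed_vector"
  assumes "open U" "bounded_bilinear B"
  shows "Ck_on k U f \<Longrightarrow> Ck_on k U g \<Longrightarrow> Ck_on k U (\<lambda>y. B (f y) (g y))"
proof (induction k arbitrary: f g)
  case 0
  then show ?case using bounded_bilinear.continuous_on[OF assms(2)] by simp
next
  case (Suc k)
  have D: "((\<lambda>y. B (f y) (g y)) has_derivative
      (\<lambda>v. B (f y) (frechet_derivative g (at y) v) + B (frechet_derivative f (at y) v) (g y)))
      (at y within S)" if "y \<in> U" for y S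
  proof -
    have "(f has_derivative frechet_derivative f (at y)) (at y within S)"
      "(g has_derivative frechet_derivative g (at y)) (at y within S)"
      using Ck_on_imp_differentiable_at[OF assms(1) Suc.prems(1) that]
        Ck_on_imp_differentiable_at[OF assms(1) Suc.prems(2) that]
        frechet_derivative_works has_derivative_at_withinI by blast+
    then show ?thesis by (rule bounded_bilinear.FDERIV[OF assms(2)])
  qed
  have "Ck_on k U (pd i (\<lambda>y. B (f y) (g y)))" for i
  proof -
    have eq: "pd i (\<lambda>y. B (f y) (g y)) y = B (f y) (pd i g y) + B (pd i f y) (g y)"
      if "y \<in> U" for y
      using pd_eq_derivative[OF D[OF that]] by (simp add: pd_def)
    have "Ck_on k U (\<lambda>y. B (f y) (pd i g y))"
      using Suc.IH[of f "pd i g"] Ck_on_Suc_imp[OF Suc.prems(1)] Suc.prems(2) by simp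
    moreover have "Ck_on k U (\<lambda>y. B (pd i f y) (g y))"
      using Suc.IH[of "pd i f" g] Suc.prems(1) Ck_on_Suc_imp[OF Suc.prems(2)] by simp
    ultimately have "Ck_on k U (\<lambda>y. B (f y) (pd i g y) + B (pd i f y) (g y))"
      by (rule Ck_on_add[OF assms(1)])
    then show ?thesis using Ck_on_cong[OF assms(1) eq] by simp
  qed
  moreover have "(\<lambda>y. B (f y) (g y)) differentiable_on U"
    unfolding differentiable_on_def differentiable_def using D by blast
  ultimately show ?case by simp
qed

lemma Ck_on_sum:
  fixes f :: "'i \<Rightarrow> real^'n \<Rightarrow> 'b::real_normed_vector"
  assumes "open U" "finite A" "\<And>j. j \<in> A \<Longrightarrow> Ck_on k U (f j)"
  shows "Ck_on k U (\<lambda>y. \<Sum>j\<in>A. f j y)"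
  using assms(2,3)
  by (induction A rule: finite_induct) (auto intro: Ck_on_add[OF assms(1)] Ck_on_const)

lemma Ck_on_vec_lambda:
  fixes f :: "'m::finite \<Rightarrow> real^'n \<Rightarrow> real"
  assumes "open U" "\<And>j. Ck_on k U (f j)"
  shows "Ck_on k U (\<lambda>y. \<chi> j. f j y)"
proof -
  have "(\<chi> j. f j y) = (\<Sum>j\<in>UNIV. f j y *\<^sub>R axis j 1)" for y
    using basis_expansion[of "\<chi> j. f j y"] by (simp add: scalar_mult_eq_scaleR)
  moreover have "Ck_on k U (\<lambda>y. f j y *\<^sub>R (axis j 1 :: real^'m))" for j
    by (rule Ck_on_bilinear[OF assms(1) bounded_bilinear_scaleR assms(2) Ck_on_const])
  then have "Ck_on k U (\<lambda>y. \<Sum>j\<in>UNIV. f j y *\<^sub>R (axis j 1 :: real^'m))"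
    by (intro Ck_on_sum[OF assms(1) finite_class.finite_UNIV])
  ultimately show ?thesis by simp
qed

lemma Ck_on_grad: "open U \<Longrightarrow> Ck_on (Suc k) U f \<Longrightarrow> Ck_on k U (grad f)"
  unfolding grad_def[abs_def] by (auto intro: Ck_on_vec_lambda)

lemma smooth_on_imp_Ck_on: "smooth_on U f \<Longrightarrow> Ck_on k U f"
  unfolding smooth_on_def by blast

lemma smooth_on_imp_continuous_on: "smooth_on U f \<Longrightarrow> continuous_on U f"
  using smooth_on_imp_Ck_on[of U f 0] by simp

lemma smooth_on_pd: "smooth_on U f \<Longrightarrow> smooth_on U (pd i f)"
  unfolding smooth_on_def by (metis Ck_on.simps(2))

lemma smooth_on_diff:
  "open U \<Longrightarrow> smooth_on U f \<Longrightarrow> smooth_on U g \<Longrightarrow> smooth_on U (\<lambda>y. f y - g y)"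
  unfolding smooth_on_def by (auto intro: Ck_on_diff)

lemma smooth_on_inner:
  "open U \<Longrightarrow> smooth_on U f \<Longrightarrow> smooth_on U g \<Longrightarrow> smooth_on U (\<lambda>y. f y \<bullet> g y)"
  unfolding smooth_on_def by (auto intro: Ck_on_bilinear[OF _ bounded_bilinear_inner])

lemma smooth_on_grad: "open U \<Longrightarrow> smooth_on U f \<Longrightarrow> smooth_on U (grad f)"
  unfolding smooth_on_def by (blast intro: Ck_on_grad)

lemma smooth_on_lie_iter:
  assumes "open U" "smooth_on U X" "smooth_on U g"
  shows "smooth_on U ((lie X ^^ k) g)"
proof (induction k)
  case (Suc k)
  have "smooth_on U (\<lambda>y. X y \<bullet> grad ((lie X ^^ k) g) y)"
    by (rule smooth_on_inner[OF assms(1,2) smooth_on_grad[OF assms(1) Suc]])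
  then show ?case by (simp add: lie_def[abs_def])
qed (simp add: assms)

lemma has_real_derivative_along_curve:
  fixes g :: "real^'n \<Rightarrow> real"
  assumes "(phi has_vector_derivative w) (at t within I)" "g differentiable (at (phi t))"
  shows "((\<lambda>s. g (phi s)) has_real_derivative (grad g (phi t) \<bullet> w)) (at t within I)"
proof -
  have "((g \<circ> phi) has_derivative (\<lambda>h. grad g (phi t) \<bullet> (h *\<^sub>R w))) (at t within I)"
    using diff_chain_within[OF assms(1)[unfolded has_vector_derivative_def]
        has_derivative_at_withinI[OF has_derivative_grad[OF assms(2)]]]
    by (simp add: o_def)
  moreover have "(\<lambda>h. grad g (phi t) \<bullet> (h *\<^sub>R w)) = (*) (grad g (phi t) \<bullet> w)"
    by (auto simp: mult.commute)
  ultimately show ?thesis by (simp add: has_field_derivative_def o_def)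
qed

lemma atLeastAtMost_subset_is_interval:
  "is_interval (I::real set) \<Longrightarrow> s \<in> I \<Longrightarrow> t \<in> I \<Longrightarrow> {s..t} \<subseteq> I"
  unfolding is_interval_1 by (meson atLeastAtMost_iff subsetI)

lemma real_mvt_within:
  fixes u :: "real \<Rightarrow> real"
  assumes "{a..b} \<subseteq> I" "a \<le> b"
    and "\<And>t. t \<in> I \<Longrightarrow> (u has_real_derivative D t) (at t within I)"
  shows "\<exists>x\<in>{a..b}. u b - u a = (b - a) * D x"
proof -
  have "\<exists>x\<in>{a..b}. u b - u a = (*) (D x) (b - a)"
  proof (rule mvt_very_simple[OF assms(2)])
    fix x assume "a \<le> x" "x \<le> b"
    then have "x \<in> I" using assms(1) by auto
    have "(u has_real_derivative D x) (at x within {a..b})"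
      by (rule has_field_derivative_subset[OF assms(3)[OF \<open>x \<in> I\<close>] assms(1)])
    then show "(u has_derivative (*) (D x)) (at x within {a..b})"
      by (simp add: has_field_derivative_def)
  qed
  then show ?thesis by (auto simp: mult.commute)
qed

lemma DERIV_nonpos_imp_decreasing_interval:
  fixes u :: "real \<Rightarrow> real"
  assumes "is_interval I" "s \<in> I" "t \<in> I" "s \<le> t"
    and "\<And>x. x \<in> I \<Longrightarrow> (u has_real_derivative D x) (at x within I)"
    and "\<And>x. x \<in> I \<Longrightarrow> D x \<le> 0"
  shows "u t \<le> u s"
proof -
  have sub: "{s..t} \<subseteq> I" using atLeastAtMost_subset_is_interval assms(1-3) .
  obtain x where "x \<in> {s..t}" "u t - u s = (t - s) * D x"
    using real_mvt_within[OF sub assms(4,5)] by blast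
  moreover have "D x \<le> 0" using sub assms(6) \<open>x \<in> {s..t}\<close> by blast
  ultimately show ?thesis using assms(4) mult_nonneg_nonpos[of "t - s" "D x"] by simp
qed

lemma DERIV_bounded_imp_lipschitz_interval:
  fixes u :: "real \<Rightarrow> real"
  assumes "is_interval I" "s \<in> I" "t \<in> I"
    and "\<And>x. x \<in> I \<Longrightarrow> (u has_real_derivative D x) (at x within I)"
    and "\<And>x. x \<in> I \<Longrightarrow> \<bar>D x\<bar> \<le> B"
  shows "\<bar>u t - u s\<bar> \<le> B * \<bar>t - s\<bar>"
proof -
  have *: "\<bar>u b - u a\<bar> \<le> B * \<bar>b - a\<bar>" if ab: "a \<in> I" "b \<in> I" "a \<le> b" for a b
  proof -
    have sub: "{a..b} \<subseteq> I" using atLeastAtMost_subset_is_interval assms(1) ab(1,2) .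
    obtain x where x: "x \<in> {a..b}" "u b - u a = (b - a) * D x"
      using real_mvt_within[OF sub ab(3) assms(4)] by blast
    have "\<bar>D x\<bar> \<le> B" using sub assms(5) x(1) by blast
    with x(2) ab(3) show ?thesis
      by (simp add: abs_mult mult.commute mult_right_mono)
  qed
  show ?thesis
    using *[OF assms(2,3)] *[OF assms(3,2)] by (cases "s \<le> t") (auto simp: abs_minus_commute)
qed

lemma barbalat:
  fixes a f :: "real \<Rightarrow> real"
  assumes der: "\<And>t. t \<in> {0..} \<Longrightarrow> (a has_real_derivative f t) (at t within {0..})"
    and lim: "(a \<longlongrightarrow> l) at_top"
    and lip: "B-lipschitz_on {0..} f"
  shows "(f \<longlongrightarrow> 0) at_top"
proof (rule ccontr)
  assume "\<not> (f \<longlongrightarrow> 0) at_top"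
  then obtain \<epsilon> where e0: "\<epsilon> > 0" and e1: "\<And>T. \<exists>t\<ge>T. \<bar>f t\<bar> \<ge> \<epsilon>"
    unfolding tendsto_iff eventually_at_top_linorder by (auto simp: not_less)
  have B: "B \<ge> 0" using lipschitz_on_nonneg[OF lip] .
  define \<eta> where "\<eta> = \<epsilon> / (2 * (B + 1))"
  have \<eta>0: "\<eta> > 0" unfolding \<eta>_def using e0 B by simp
  obtain T where T: "\<And>t. t \<ge> T \<Longrightarrow> \<bar>a t - l\<bar> < \<epsilon> * \<eta> / 4"
    using tendstoD[OF lim, of "\<epsilon> * \<eta> / 4"] e0 \<eta>0
    unfolding eventually_at_top_linorder dist_real_def by auto
  obtain t where t: "t \<ge> max T 0" "\<bar>f t\<bar> \<ge> \<epsilon>" using e1 by blast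
  obtain x where x: "x \<in> {t..t+\<eta>}" "a (t + \<eta>) - a t = \<eta> * f x"
    using real_mvt_within[of t "t + \<eta>" "{0..}", OF _ _ der] t \<eta>0 by auto
  have "\<bar>f x - f t\<bar> \<le> B * \<bar>x - t\<bar>"
    using lipschitz_onD[OF lip, of x t] t x by (simp add: dist_real_def)
  also have "\<dots> \<le> (B + 1) * \<eta>" using x B by (intro mult_mono) auto
  also have "\<dots> = \<epsilon> / 2" unfolding \<eta>_def using B by (simp add: field_simps)
  finally have "\<bar>f x\<bar> \<ge> \<epsilon> / 2" using t(2) by linarith
  then have "\<bar>a (t + \<eta>) - a t\<bar> \<ge> \<epsilon> * \<eta> / 2"
    using x(2) \<eta>0 mult_left_mono[of "\<epsilon> / 2" "\<bar>f x\<bar>" \<eta>] by (simp add: abs_mult mult.commute)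
  moreover have "\<bar>a (t + \<eta>) - l\<bar> < \<epsilon> * \<eta> / 4" "\<bar>a t - l\<bar> < \<epsilon> * \<eta> / 4"
    using T[of "t + \<eta>"] T[of t] t \<eta>0 by auto
  ultimately show False by linarith
qed

lemma decreasing_bounded_below_convergent_at_top:
  fixes u :: "real \<Rightarrow> real"
  assumes "\<And>s t. 0 \<le> s \<Longrightarrow> s \<le> t \<Longrightarrow> u t \<le> u s" "\<And>t. 0 \<le> t \<Longrightarrow> 0 \<le> u t"
  shows "\<exists>L. (u \<longlongrightarrow> L) at_top"
proof -
  define L where "L = Inf (u ` {0..})"
  have bdd: "bdd_below (u ` {0..})" unfolding bdd_below_def using assms(2) by auto
  have "(u \<longlongrightarrow> L) at_top"
  proof (rule tendstoI)
    fix e :: real assume "e > 0"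
    then obtain t0 where t0: "t0 \<ge> 0" "u t0 < L + e"
      using cInf_lessD[of "u ` {0..}" "L + e"] unfolding L_def by auto
    have "dist (u t) L < e" if "t \<ge> t0" for t
      using assms(1)[OF t0(1) that] cInf_lower[OF _ bdd, of "u t"] t0 that
      unfolding L_def dist_real_def by auto
    then show "\<forall>\<^sub>F t in at_top. dist (u t) L < e"
      unfolding eventually_at_top_linorder by blast
  qed
  then show ?thesis by blast
qed

section \<open>Estimates on compact sets\<close>

lemma continuous_on_compact_norm_bound:
  assumes "continuous_on U g" "compact D" "D \<subseteq> U"
  shows "\<exists>B>0. \<forall>y\<in>D. norm (g y) \<le> B"
  using compact_imp_bounded[OF compact_continuous_image[OF continuous_on_subset[OF assms(1,3)] assms(2)]]
  unfolding bounded_pos by auto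

lemma compact_cball_neighbourhood:
  fixes K :: "'a::euclidean_space set"
  assumes "compact K" "open U" "K \<subseteq> U"
  obtains \<delta> D where "\<delta> > 0" "compact D" "D \<subseteq> U" "\<And>x. x \<in> K \<Longrightarrow> cball x \<delta> \<subseteq> D"
proof -
  obtain e where e: "e > 0" "(\<Union>x\<in>K. cball x e) \<subseteq> U"
    using compact_subset_open_imp_cball_epsilon_subset[OF assms] by blast
  define D where "D = {x + y | x y. x \<in> K \<and> y \<in> cball 0 e}"
  have "compact D" unfolding D_def by (intro compact_sums assms(1) compact_cball)
  moreover have "cball x e \<subseteq> D" if "x \<in> K" for x
  proof
    fix z assume "z \<in> cball x e"
    then have "z = x + (z - x)" "z - x \<in> cball 0 e" by (auto simp: dist_norm norm_minus_commute)
    with that show "z \<in> D" unfolding D_def by blast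
  qed
  moreover have "D \<subseteq> U"
  proof
    fix z assume "z \<in> D"
    then obtain x y where "z = x + y" "x \<in> K" "y \<in> cball 0 e" unfolding D_def by auto
    then have "z \<in> cball x e" by (auto simp: dist_norm)
    with e \<open>x \<in> K\<close> show "z \<in> U" by blast
  qed
  ultimately show ?thesis using that e(1) by blast
qed

lemma Ck_on_Suc_lipschitz_on_convex:
  fixes f :: "real^'n \<Rightarrow> 'b::real_normed_vector"
  assumes "open U" "Ck_on (Suc k) U f" "compact D" "D \<subseteq> U"
  obtains L where "\<And>C. convex C \<Longrightarrow> C \<subseteq> D \<Longrightarrow> L-lipschitz_on C f"
proof -
  have "\<exists>B>0. \<forall>y\<in>D. norm (pd i f y) \<le> B" for i
  proof -
    from assms(2) have "Ck_on k U (pd i f)" by simp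
    then show ?thesis
      by (rule continuous_on_compact_norm_bound[OF Ck_on_imp_continuous_on assms(3,4)])
  qed
  then obtain B where B: "\<And>i. B i > 0" "\<And>i y. y \<in> D \<Longrightarrow> norm (pd i f y) \<le> B i"
    by metis
  define L where "L = (\<Sum>i\<in>UNIV. B i)"
  have "L-lipschitz_on C f" if C: "convex C" "C \<subseteq> D" for C
  proof (rule lipschitz_onI)
    fix a b assume ab: "a \<in> C" "b \<in> C"
    have "norm (f a - f b) \<le> L * norm (a - b)"
    proof (rule differentiable_bound[OF C(1) _ _ ab])
      fix x assume "x \<in> C"
      then have "x \<in> U" "x \<in> D" using C(2) assms(4) by auto
      show "(f has_derivative (\<lambda>v. \<Sum>i\<in>UNIV. v$i *\<^sub>R pd i f x)) (at x within C)"
        using has_derivative_pd_expansion[OF Ck_on_imp_differentiable_at[OF assms(1,2) \<open>x \<in> U\<close>]]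
        by (rule has_derivative_at_withinI)
      show "onorm (\<lambda>v. \<Sum>i\<in>UNIV. v$i *\<^sub>R pd i f x) \<le> L"
      proof (rule onorm_le)
        fix v :: "real^'n"
        have "norm (\<Sum>i\<in>UNIV. v$i *\<^sub>R pd i f x) \<le> (\<Sum>i\<in>UNIV. \<bar>v$i\<bar> * norm (pd i f x))"
          using norm_sum[of "\<lambda>i. v$i *\<^sub>R pd i f x" UNIV] by simp
        also have "\<dots> \<le> (\<Sum>i\<in>UNIV. norm v * B i)"
          using B(2)[OF \<open>x \<in> D\<close>] component_le_norm_cart[of v] by (intro sum_mono mult_mono) auto
        finally show "norm (\<Sum>i\<in>UNIV. v$i *\<^sub>R pd i f x) \<le> L * norm v"
          by (simp add: L_def sum_distrib_left mult.commute)
      qed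
    qed
    then show "dist (f a) (f b) \<le> L * dist a b" by (simp add: dist_norm)
  next
    show "0 \<le> L" unfolding L_def using B(1) by (simp add: sum_nonneg less_imp_le)
  qed
  then show ?thesis using that by blast
qed

(* Compare V at y with V at the gradient-descent point y - s grad V y, where it is still nonnegative. *)
lemma nonneg_grad_descent_bound:
  fixes V :: "real^'n \<Rightarrow> real"
  assumes diff: "\<And>z. z \<in> cball y r \<Longrightarrow> V differentiable (at z)"
    and nonneg: "\<And>z. z \<in> cball y r \<Longrightarrow> 0 \<le> V z"
    and lip: "L-lipschitz_on (cball y r) (grad V)"
    and s: "s > 0" "s * norm (grad V y) \<le> r" "L * s \<le> 1/2"
  shows "s * (norm (grad V y))\<^sup>2 \<le> 2 * V y"
proof -
  define g where "g = grad V y"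
  define w where "w = - s *\<^sub>R g"
  have nw: "norm w = s * norm g" unfolding w_def using s(1) by simp
  have L: "L \<ge> 0" using lipschitz_on_nonneg[OF lip] .
  have "0 \<le> r" using s(1,2) by (meson less_imp_le mult_nonneg_nonneg norm_ge_zero order_trans)
  then have seg: "closed_segment y (y + w) \<subseteq> cball y r"
    using s(2) nw by (intro closed_segment_subset) (auto simp: g_def dist_norm)
  define h where "h z = V z - g \<bullet> z" for z
  have "norm (h (y + w) - h y) \<le> (L * norm w) * norm ((y + w) - y)"
  proof (rule differentiable_bound[OF convex_closed_segment])
    fix z assume z: "z \<in> closed_segment y (y + w)"
    then have "z \<in> cball y r" using seg by blast
    have "(h has_derivative (\<lambda>v. grad V z \<bullet> v - g \<bullet> v)) (at z)"
      unfolding h_def[abs_def]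
      by (intro has_derivative_diff has_derivative_grad diff[OF \<open>z \<in> cball y r\<close>]
          bounded_linear.has_derivative[OF bounded_linear_inner_right] has_derivative_ident)
    then show "(h has_derivative (\<lambda>v. grad V z \<bullet> v - g \<bullet> v)) (at z within closed_segment y (y + w))"
      by (rule has_derivative_at_withinI)
    have "norm (grad V z - g) \<le> L * norm w"
      using lipschitz_on_normD[OF lip \<open>z \<in> cball y r\<close>, of y] \<open>0 \<le> r\<close> dist_in_closed_segment[OF z] L
      by (simp add: g_def dist_norm) (meson mult_left_mono order_trans)
    then show "onorm (\<lambda>v. grad V z \<bullet> v - g \<bullet> v) \<le> L * norm w"
      by (intro onorm_le) (metis Cauchy_Schwarz_ineq2 inner_diff_left mult_right_mono norm_ge_zero
          order_trans real_norm_def)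
  qed auto
  then have "V (y + w) \<le> V y + g \<bullet> w + L * (norm w)\<^sup>2"
    unfolding h_def by (simp add: inner_add_right power2_eq_square)
  moreover have "0 \<le> V (y + w)" using seg nonneg by auto
  moreover have "g \<bullet> w = - s * (norm g)\<^sup>2" unfolding w_def by (simp add: power2_norm_eq_inner)
  moreover have "L * (norm w)\<^sup>2 \<le> (1/2) * (s * (norm g)\<^sup>2)"
    using mult_right_mono[OF s(3), of "s * (norm g)\<^sup>2"] s(1) unfolding nw
    by (simp add: power2_eq_square mult_ac)
  ultimately show ?thesis by (simp add: g_def)
qed

lemma nonneg_Ck2_norm_grad_sq_bound:
  fixes V :: "real^'n \<Rightarrow> real"
  assumes "open U" "Ck_on (Suc (Suc k)) U V" "\<And>x. x \<in> U \<Longrightarrow> 0 \<le> V x" "compact C" "C \<subseteq> U"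
  obtains Q where "Q \<ge> 0" "\<And>y. y \<in> C \<Longrightarrow> (norm (grad V y))\<^sup>2 \<le> Q * V y"
proof -
  obtain \<delta> D where D: "\<delta> > 0" "compact D" "D \<subseteq> U" "\<And>x. x \<in> C \<Longrightarrow> cball x \<delta> \<subseteq> D"
    using compact_cball_neighbourhood[OF assms(4,1,5)] by blast
  obtain L where L: "\<And>C. convex C \<Longrightarrow> C \<subseteq> D \<Longrightarrow> L-lipschitz_on C (grad V)"
    using Ck_on_Suc_lipschitz_on_convex[OF assms(1) Ck_on_grad[OF assms(1,2)] D(2,3)] by blast
  obtain G where G: "G > 0" "\<And>y. y \<in> C \<Longrightarrow> norm (grad V y) \<le> G"
    using continuous_on_compact_norm_bound[OF Ck_on_imp_continuous_on[OF Ck_on_grad[OF assms(1,2)]]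
        assms(4,5)] by blast
  have lip: "L-lipschitz_on (cball y \<delta>) (grad V)" if "y \<in> C" for y
    using L[OF convex_cball D(4)[OF that]] .
  have L0: "L \<ge> 0" using lipschitz_on_nonneg[OF L[OF convex_empty empty_subsetI]] .
  define s where "s = min (1 / (2 * (L + 1))) (\<delta> / G)"
  have s0: "s > 0" unfolding s_def using L0 G(1) D(1) by auto
  have sL: "L * s \<le> 1/2"
  proof -
    have "L * s \<le> L * (1 / (2 * (L + 1)))" unfolding s_def using L0 by (intro mult_left_mono) auto
    also have "\<dots> \<le> 1/2" using L0 by (simp add: field_simps)
    finally show ?thesis .
  qed
  have "(norm (grad V y))\<^sup>2 \<le> (2 / s) * V y" if "y \<in> C" for y
  proof -
    have ball: "cball y \<delta> \<subseteq> U" using D(3,4) that by blast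
    have "s * norm (grad V y) \<le> (\<delta> / G) * G"
      using G that s0 unfolding s_def by (intro mult_mono) auto
    then have "s * norm (grad V y) \<le> \<delta>" using G(1) by simp
    then have "s * (norm (grad V y))\<^sup>2 \<le> 2 * V y"
      using Ck_on_imp_differentiable_at[OF assms(1,2)] assms(3) lip[OF that] ball s0 sL
      by (intro nonneg_grad_descent_bound[of y \<delta> V L s]) (auto simp: subset_iff)
    then show ?thesis using s0 by (simp add: field_simps)
  qed
  then show ?thesis using that s0 by (meson less_imp_le zero_le_divide_iff zero_le_numeral)
qed

section \<open>Existence of solutions\<close>

lemma clamped_integral_in_bcontfun:
  fixes f :: "real \<Rightarrow> 'a::banach"
  assumes "continuous_on UNIV f" "\<And>s. norm (f s) \<le> M" "0 \<le> h"
  shows "(\<lambda>t. x + integral {a..max a (min (a + h) t)} f) \<in> bcontfun"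
proof -
  define cl where "cl t = max a (min (a + h) t)" for t
  have clI: "cl t \<in> {a..a+h}" for t unfolding cl_def using assms(3) by auto
  have fc: "continuous_on A f" for A using continuous_on_subset[OF assms(1)] by blast
  have "continuous_on {a..a+h} (\<lambda>\<tau>. integral {a..\<tau>} f)"
    by (rule indefinite_integral_continuous_1[OF integrable_continuous_interval[OF fc]])
  then have "continuous_on UNIV (\<lambda>t. integral {a..cl t} f)"
    by (rule continuous_on_compose2) (use clI in \<open>auto simp: cl_def intro!: continuous_intros\<close>)
  then have "continuous_on UNIV (\<lambda>t. x + integral {a..cl t} f)"
    by (intro continuous_intros)
  moreover have "norm (x + integral {a..cl t} f) \<le> norm x + M * h" for t
  proof -
    have M0: "M \<ge> 0" using assms(2)[of a] norm_ge_zero order_trans by blast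
    have "norm (integral {a..cl t} f) \<le> M * (cl t - a)"
      using clI[of t] by (intro integral_bound fc assms(2)) auto
    also have "\<dots> \<le> M * h" using clI[of t] M0 by (intro mult_left_mono) auto
    finally show ?thesis by (meson add_left_mono norm_triangle_ineq order_trans)
  qed
  then have "bounded (range (\<lambda>t. x + integral {a..cl t} f))" unfolding bounded_iff by blast
  ultimately show ?thesis unfolding bcontfun_def cl_def by simp
qed

(* Clamping t to [a, a+h] turns the Picard operator into a contraction (constant L h <= 1/2) of the
   complete space of bounded continuous functions on the whole real line. *)
lemma integral_equation_fixed_point:
  fixes G :: "'a::banach \<Rightarrow> 'a"
  assumes lip: "L-lipschitz_on UNIV G" and bound: "\<And>y. norm (G y) \<le> M"
    and h: "0 \<le> h" "L * h \<le> 1/2"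
  obtains g where "continuous_on UNIV g" "\<And>t. t \<in> {a..a+h} \<Longrightarrow> g t = x + integral {a..t} (\<lambda>s. G (g s))"
proof -
  have L0: "L \<ge> 0" using lipschitz_on_nonneg[OF lip] .
  define cl where "cl t = max a (min (a + h) t)" for t
  have clI: "cl t \<in> {a..a+h}" for t unfolding cl_def using h by auto
  have fc: "continuous_on A (\<lambda>s. G (apply_bcontfun f s))" for f :: "(real, 'a) bcontfun" and A
    using continuous_on_compose2[OF lipschitz_on_continuous_on[OF lip] continuous_on_apply_bcontfun]
    by blast
  define Pf where "Pf f t = x + integral {a..cl t} (\<lambda>s. G (apply_bcontfun f s))"
    for f :: "(real, 'a) bcontfun" and t
  have "Pf f \<in> bcontfun" for f
    unfolding Pf_def[abs_def] cl_def using bound h(1) by (intro clamped_integral_in_bcontfun fc)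
  then have Pf: "apply_bcontfun (Bcontfun (Pf f)) = Pf f" for f
    using Bcontfun_inverse by blast
  have "dist (Bcontfun (Pf f)) (Bcontfun (Pf g)) \<le> (1/2) * dist f g" for f g
  proof (rule dist_bound)
    fix t
    have "norm (G (apply_bcontfun f s) - G (apply_bcontfun g s)) \<le> L * dist f g" for s
      using lipschitz_onD[OF lip, of "apply_bcontfun f s" "apply_bcontfun g s"] dist_bounded[of f s g] L0
      by (simp add: dist_norm) (meson mult_left_mono order_trans)
    then have "norm (integral {a..cl t} (\<lambda>s. G (apply_bcontfun f s) - G (apply_bcontfun g s)))
        \<le> (L * dist f g) * (cl t - a)"
      using clI[of t] by (intro integral_bound continuous_on_diff fc) auto
    also have "\<dots> \<le> (L * dist f g) * h" using clI[of t] L0 by (intro mult_left_mono) auto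
    also have "\<dots> = (L * h) * dist f g" by simp
    also have "\<dots> \<le> (1/2) * dist f g" using h(2) by (intro mult_right_mono) auto
    finally show "dist (apply_bcontfun (Bcontfun (Pf f)) t) (apply_bcontfun (Bcontfun (Pf g)) t) \<le> 1/2 * dist f g"
      unfolding Pf Pf_def dist_norm
      by (simp add: integral_diff integrable_continuous_interval[OF fc])
  qed
  then obtain ff where ff: "Bcontfun (Pf ff) = ff"
    using banach_fix_type[of "1/2" "\<lambda>f. Bcontfun (Pf f)"] by auto
  have "apply_bcontfun ff t = x + integral {a..t} (\<lambda>s. G (apply_bcontfun ff s))" if "t \<in> {a..a+h}" for t
    using arg_cong[OF ff, of apply_bcontfun] that unfolding Pf Pf_def cl_def
    by (metis atLeastAtMost_iff max.absorb2 min.absorb2)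
  with continuous_on_apply_bcontfun that show ?thesis by blast
qed

(* F is extended to the whole space through the nearest-point retraction onto the ball; the solution
   of the extended equation stays in the ball because M h <= delta. *)
lemma picard_local:
  fixes F :: "real^'n \<Rightarrow> real^'n"
  assumes lip: "L-lipschitz_on (cball x \<delta>) F" and bound: "\<And>y. y \<in> cball x \<delta> \<Longrightarrow> norm (F y) \<le> M"
    and h: "0 \<le> \<delta>" "0 \<le> h" "M * h \<le> \<delta>" "L * h \<le> 1/2"
  obtains g where "g a = x" "is_solution (cball x \<delta>) F {a..a+h} g"
proof -
  define G where "G y = F (closest_point (cball x \<delta>) y)" for y
  have ne: "cball x \<delta> \<noteq> {}" using h(1) by auto
  note cp_in = closest_point_in_set[OF closed_cball ne]
  have "1-lipschitz_on UNIV (closest_point (cball x \<delta>))"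
    using closest_point_lipschitz[OF convex_cball closed_cball ne] by (intro lipschitz_onI) auto
  then have Glip: "(L * 1)-lipschitz_on UNIV G"
    unfolding G_def by (rule lipschitz_on_compose2) (use lip cp_in in \<open>auto intro: lipschitz_on_subset\<close>)
  have Gb: "norm (G y) \<le> M" for y unfolding G_def using bound cp_in by blast
  obtain g where gc: "continuous_on UNIV g"
    and geq: "\<And>t. t \<in> {a..a+h} \<Longrightarrow> g t = x + integral {a..t} (\<lambda>s. G (g s))"
    by (rule integral_equation_fixed_point[OF Glip[unfolded mult_1_right] Gb h(2,4), of a x])
      (rule that)
  have "continuous_on UNIV (\<lambda>s. G (g s))"
    using continuous_on_compose2[OF lipschitz_on_continuous_on[OF Glip] gc] by simp
  then have Ggc: "continuous_on A (\<lambda>s. G (g s))" for A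
    using continuous_on_subset by blast
  have "norm (F x) \<le> M" using bound h(1) by simp
  then have M0: "0 \<le> M" by (meson norm_ge_zero order_trans)
  have gin: "g t \<in> cball x \<delta>" if "t \<in> {a..a+h}" for t
  proof -
    have "norm (integral {a..t} (\<lambda>s. G (g s))) \<le> M * (t - a)"
      using that bound cp_in by (intro integral_bound Ggc) (auto simp: G_def)
    also have "\<dots> \<le> \<delta>"
      using that h(3) M0 mult_left_mono[of "t - a" h M] by auto
    finally show ?thesis using geq[OF that] by (simp add: dist_norm)
  qed
  have "(g has_vector_derivative F (g t)) (at t within {a..a+h})" if t: "t \<in> {a..a+h}" for t
  proof -
    have "((\<lambda>u. x + integral {a..u} (\<lambda>s. G (g s))) has_vector_derivative G (g t)) (at t within {a..a+h})"
      using integral_has_vector_derivative[OF Ggc t] by (auto intro!: derivative_eq_intros)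
    then have "(g has_vector_derivative G (g t)) (at t within {a..a+h})"
      by (rule has_vector_derivative_transform[OF t geq, rotated])
    then show ?thesis unfolding G_def using closest_point_self[OF gin[OF t]] by simp
  qed
  with gin geq[of a] h(2) show ?thesis using that unfolding is_solution_def by auto
qed

lemma continuous_on_is_solution:
  assumes "is_solution U F I phi"
  shows "continuous_on I phi"
  using assms has_vector_derivative_continuous
  unfolding is_solution_def continuous_on_eq_continuous_within by blast

lemma is_solution_mono: "is_solution A F I g \<Longrightarrow> A \<subseteq> B \<Longrightarrow> is_solution B F I g"
  unfolding is_solution_def by blast

lemma has_vector_derivative_within_Un:
  assumes "(f has_vector_derivative f') (at x within A)" "(f has_vector_derivative f') (at x within B)"
  shows "(f has_vector_derivative f') (at x within A \<union> B)"
  using assms unfolding has_vector_derivative_def has_derivative_within by (auto simp: Lim_within_Un)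

lemma is_solution_transform:
  assumes "is_solution U F I g" "\<And>t. t \<in> I \<Longrightarrow> f t = g t"
  shows "is_solution U F I f"
  using assms has_vector_derivative_transform[of _ I f g] unfolding is_solution_def by metis

lemma nat_floor_divide_eq:
  fixes h t :: real
  assumes "h > 0" "real n * h \<le> t" "t < real n * h + h"
  shows "nat \<lfloor>t / h\<rfloor> = n"
proof -
  have "real n \<le> t / h" "t / h < real n + 1"
    using assms by (simp_all add: le_divide_eq divide_less_eq algebra_simps)
  then show ?thesis by linarith
qed

lemma nat_floor_divide_bounds:
  fixes h t :: real
  assumes "h > 0" "t \<ge> 0"
  shows "real (nat \<lfloor>t / h\<rfloor>) * h \<le> t" "t < real (nat \<lfloor>t / h\<rfloor>) * h + h"
proof -
  have "0 \<le> \<lfloor>t / h\<rfloor>" using assms by simp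
  then have "real (nat \<lfloor>t / h\<rfloor>) = real_of_int \<lfloor>t / h\<rfloor>" by simp
  then have "real (nat \<lfloor>t / h\<rfloor>) \<le> t / h" "t / h < real (nat \<lfloor>t / h\<rfloor>) + 1"
    using of_int_floor_le[of "t / h"] real_of_int_floor_add_one_gt[of "t / h"] by linarith+
  then show "real (nat \<lfloor>t / h\<rfloor>) * h \<le> t" "t < real (nat \<lfloor>t / h\<rfloor>) * h + h"
    using assms by (simp_all add: le_divide_eq divide_less_eq algebra_simps)
qed

lemma is_solution_halfline_of_pieces:
  assumes h: "h > 0" and pieces: "\<And>n. is_solution U F {real n * h..real n * h + h} phi"
  shows "is_solution U F {0..} phi"
  unfolding is_solution_def
proof (intro ballI conjI)
  fix t :: real assume "t \<in> {0..}"
  define m where "m = nat \<lfloor>t / h\<rfloor>"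
  have tm: "real m * h \<le> t" "t < real m * h + h"
    using nat_floor_divide_bounds[OF h] \<open>t \<in> {0..}\<close> unfolding m_def by auto
  then have t: "t \<in> {real m * h..real m * h + h}" by simp
  have D: "(phi has_vector_derivative F (phi t)) (at t within {real n * h..real n * h + h})"
    if "t \<in> {real n * h..real n * h + h}" for n
    using pieces[of n] that unfolding is_solution_def by blast
  show "phi t \<in> U" using pieces[of m] t unfolding is_solution_def by blast
  consider "m = 0" | "real m * h < t" | k where "m = Suc k" "t = real m * h"
    using tm(1) by (cases m) force+
  then show "(phi has_vector_derivative F (phi t)) (at t within {0..})"
  proof cases
    case 1
    have "at t within {0..} = at t within {real m * h..real m * h + h}"
      by (rule at_within_nhd[of t "{-h<..<h}"]) (use tm 1 h in auto)
    then show ?thesis using D[OF t] by simp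
  next
    case 2
    have mh0: "0 \<le> real m * h" using h by simp
    have "at t within {0..} = at t within {real m * h..real m * h + h}"
      by (rule at_within_nhd[of t "{real m * h<..<real m * h + h}"]) (use tm 2 in \<open>auto intro: order_trans[OF mh0] less_imp_le\<close>)
    then show ?thesis using D[OF t] by simp
  next
    case 3
    then have t': "t \<in> {real k * h..real k * h + h}" using h by (simp add: algebra_simps)
    have kh0: "0 \<le> real k * h" using h by simp
    have "at t within {0..} = at t within ({real k * h..real k * h + h} \<union> {real m * h..real m * h + h})"
      by (rule at_within_nhd[of t "{real k * h<..<real m * h + h}"])
        (use 3 h in \<open>auto simp: algebra_simps intro: order_trans[OF kh0] less_imp_le\<close>)
    then show ?thesis using has_vector_derivative_within_Un[OF D[OF t'] D[OF t]] by simp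
  qed
qed

lemma solution_halfline_of_uniform_local:
  assumes h: "h > 0"
    and local: "\<And>x a. x \<in> K \<Longrightarrow> \<exists>g. g a = x \<and> is_solution U F {a..a+h} g"
    and stay: "\<And>g a. is_solution U F {a..a+h} g \<Longrightarrow> g a \<in> K \<Longrightarrow> g (a + h) \<in> K"
    and x0: "x0 \<in> K"
  obtains phi where "phi 0 = x0" "is_solution U F {0..} phi"
proof -
  define sol where "sol a x = (SOME g. g a = x \<and> is_solution U F {a..a+h} g)" for a x
  have sol: "sol a x a = x" "is_solution U F {a..a+h} (sol a x)" if "x \<in> K" for a x
    using someI_ex[OF local[OF that]] unfolding sol_def by blast+
  define xs where "xs = rec_nat x0 (\<lambda>n y. sol (real n * h) y (real n * h + h))"
  have xs_Suc: "xs (Suc n) = sol (real n * h) (xs n) (real n * h + h)" for n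
    unfolding xs_def by simp
  have xsK: "xs n \<in> K" for n
  proof (induction n)
    case 0
    then show ?case using x0 by (simp add: xs_def)
  next
    case (Suc n)
    then show ?case unfolding xs_Suc using stay sol by metis
  qed
  define piece where "piece n = sol (real n * h) (xs n)" for n
  have piece_sol: "is_solution U F {real n * h..real n * h + h} (piece n)" for n
    unfolding piece_def using sol(2)[OF xsK] .
  have piece_start: "piece n (real n * h) = xs n" for n
    unfolding piece_def using sol(1)[OF xsK] .
  define phi where "phi t = piece (nat \<lfloor>t / h\<rfloor>) t" for t
  have "phi t = piece n t" if "t \<in> {real n * h..real n * h + h}" for n t
  proof (cases "t < real n * h + h")
    case True
    then show ?thesis using that h nat_floor_divide_eq[of h n t] by (simp add: phi_def)
  next
    case False
    then have t: "t = real (Suc n) * h" using that by (simp add: algebra_simps)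
    then have "phi t = xs (Suc n)"
      using h nat_floor_divide_eq[of h "Suc n" t] piece_start[of "Suc n"] by (simp add: phi_def)
    also have "\<dots> = piece n t" using t by (simp add: xs_Suc piece_def algebra_simps)
    finally show ?thesis .
  qed
  then have "is_solution U F {real n * h..real n * h + h} phi" for n
    using is_solution_transform[OF piece_sol] by blast
  then have "is_solution U F {0..} phi" by (rule is_solution_halfline_of_pieces[OF h])
  moreover have "phi 0 = x0"
    using piece_start[of 0] h nat_floor_divide_eq[of h 0 0] by (simp add: phi_def xs_def)
  ultimately show ?thesis using that by blast
qed

section \<open>The Lyapunov function along solutions\<close>

locale lyapunov_system =
  fixes U :: "(real^'n) set" and X :: "real^'n \<Rightarrow> real^'n" and V :: "real^'n \<Rightarrow> real"
  assumes open_U: "open U" and smooth_X: "smooth_on U X" and smooth_V: "smooth_on U V"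
    and V_nonneg: "\<And>x. x \<in> U \<Longrightarrow> 0 \<le> V x"
    and grad_V_orthogonal: "\<And>x. x \<in> U \<Longrightarrow> grad V x \<bullet> X x = 0"
begin

definition F :: "real^'n \<Rightarrow> real^'n" where "F x = X x - grad V x"

lemma smooth_F: "smooth_on U F"
  unfolding F_def[abs_def] by (intro smooth_on_diff open_U smooth_X smooth_on_grad smooth_V)

lemma V_differentiable: "y \<in> U \<Longrightarrow> V differentiable (at y)"
  using Ck_on_imp_differentiable_at[OF open_U smooth_on_imp_Ck_on[OF smooth_V, of "Suc 0"]] .

lemma has_real_derivative_V_along_F:
  assumes "is_solution U F I phi" "t \<in> I"
  shows "((\<lambda>s. V (phi s)) has_real_derivative - (norm (grad V (phi t)))\<^sup>2) (at t within I)"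
proof -
  have "phi t \<in> U" "(phi has_vector_derivative F (phi t)) (at t within I)"
    using assms unfolding is_solution_def by auto
  moreover from \<open>phi t \<in> U\<close> have "grad V (phi t) \<bullet> F (phi t) = - (norm (grad V (phi t)))\<^sup>2"
    using grad_V_orthogonal by (simp add: F_def inner_diff_right power2_norm_eq_inner)
  ultimately show ?thesis using has_real_derivative_along_curve V_differentiable by metis
qed

lemma has_real_derivative_V_along_X:
  assumes "is_solution U X I phi" "t \<in> I"
  shows "((\<lambda>s. V (phi s)) has_real_derivative 0) (at t within I)"
proof -
  have "phi t \<in> U" "(phi has_vector_derivative X (phi t)) (at t within I)"
    using assms unfolding is_solution_def by auto
  then show ?thesis
    using has_real_derivative_along_curve[OF _ V_differentiable] grad_V_orthogonal by metis
qed

lemma V_decreasing_along_F: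
  assumes "is_solution U F I phi" "is_interval I" "s \<in> I" "t \<in> I" "s \<le> t"
  shows "V (phi t) \<le> V (phi s)"
  by (rule DERIV_nonpos_imp_decreasing_interval[OF assms(2-5) has_real_derivative_V_along_F[OF assms(1)]])
    simp_all

(* V (phi s) * exp (Q s) is nondecreasing when |grad V|^2 <= Q V along the solution. *)
lemma V_zero_backward_along_F:
  assumes sol: "is_solution U F I phi" and I: "is_interval I" "t \<in> I" "t0 \<in> I" "t \<le> t0"
    and zero: "V (phi t0) = 0"
  shows "V (phi t) = 0"
proof -
  have sub: "{t..t0} \<subseteq> I" using atLeastAtMost_subset_is_interval I(1-3) .
  have "compact (phi ` {t..t0})"
    using compact_continuous_image[OF continuous_on_subset[OF continuous_on_is_solution[OF sol] sub]]
    by simp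
  moreover have "phi ` {t..t0} \<subseteq> U" using sol sub unfolding is_solution_def by auto
  ultimately obtain Q where Q: "\<And>y. y \<in> phi ` {t..t0} \<Longrightarrow> (norm (grad V y))\<^sup>2 \<le> Q * V y"
    using nonneg_Ck2_norm_grad_sq_bound[OF open_U smooth_on_imp_Ck_on[OF smooth_V, of "Suc (Suc 0)"] V_nonneg]
    by blast
  have sol': "is_solution U F {t..t0} phi" using sol sub unfolding is_solution_def
    by (auto intro: has_vector_derivative_within_subset)
  have "- (V (phi t0) * exp (Q * t0)) \<le> - (V (phi t) * exp (Q * t))"
  proof (rule DERIV_nonpos_imp_decreasing_interval[OF is_interval_cc _ _ I(4)])
    fix s assume s: "s \<in> {t..t0}"
    show "((\<lambda>s. - (V (phi s) * exp (Q * s))) has_real_derivative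
        - (- (norm (grad V (phi s)))\<^sup>2 * exp (Q * s) + V (phi s) * (exp (Q * s) * Q))) (at s within {t..t0})"
      using has_real_derivative_V_along_F[OF sol' s] by (auto intro!: derivative_eq_intros)
    have "(norm (grad V (phi s)))\<^sup>2 \<le> Q * V (phi s)" using Q s by blast
    then show "- (- (norm (grad V (phi s)))\<^sup>2 * exp (Q * s) + V (phi s) * (exp (Q * s) * Q)) \<le> 0"
      by (simp add: algebra_simps)
  qed (use I in auto)
  then have "V (phi t) \<le> 0" using zero by (simp add: mult_le_0_iff)
  moreover have "phi t \<in> U" using sol I(2) unfolding is_solution_def by blast
  ultimately show ?thesis using V_nonneg by (simp add: order_antisym)
qed

lemma invariant_zero_set_X: "invariant_set U X {x\<in>U. V x = 0}"
  unfolding invariant_set_def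
proof (intro allI impI ballI)
  fix I phi t
  assume H: "is_interval I \<and> is_solution U X I phi \<and> (\<exists>t0\<in>I. phi t0 \<in> {x \<in> U. V x = 0})"
    and t: "t \<in> I"
  then obtain t0 where t0: "t0 \<in> I" "V (phi t0) = 0" by auto
  obtain k where "\<forall>s\<in>I. V (phi s) = k"
    using has_field_derivative_zero_constant[OF is_interval_convex has_real_derivative_V_along_X] H
    by metis
  moreover have "phi t \<in> U" using H t unfolding is_solution_def by simp
  ultimately show "phi t \<in> {x \<in> U. V x = 0}" using t t0 by simp
qed

lemma invariant_zero_set_F: "invariant_set U F {x\<in>U. V x = 0}"
  unfolding invariant_set_def
proof (intro allI impI ballI)
  fix I phi t
  assume H: "is_interval I \<and> is_solution U F I phi \<and> (\<exists>t0\<in>I. phi t0 \<in> {x \<in> U. V x = 0})"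
    and t: "t \<in> I"
  then obtain t0 where t0: "t0 \<in> I" "V (phi t0) = 0" by auto
  have "phi t \<in> U" using H t unfolding is_solution_def by blast
  moreover have "V (phi t) = 0"
  proof (cases "t0 \<le> t")
    case True
    then show ?thesis
      using V_decreasing_along_F[of I phi t0 t] V_nonneg[OF \<open>phi t \<in> U\<close>] H t t0 by simp
  next
    case False
    then show ?thesis using V_zero_backward_along_F[of I phi t t0] H t t0 by simp
  qed
  ultimately show "phi t \<in> {x \<in> U. V x = 0}" by simp
qed

end

locale lyapunov_sublevel = lyapunov_system +
  fixes c :: real
  assumes compact_sublevel: "compact {x\<in>U. V x \<in> {0..c}}"
    and S_set_sublevel: "S_set U X V \<inter> {x\<in>U. V x \<in> {0..c}} \<subseteq> {x\<in>U. V x = 0}"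
begin

definition K where "K = {x\<in>U. V x \<in> {0..c}}"

lemma K_subset: "K \<subseteq> U" and compact_K: "compact K"
  using compact_sublevel unfolding K_def by auto

lemma K_forward_invariant:
  assumes "is_solution U F I phi" "is_interval I" "a \<in> I" "phi a \<in> K" "t \<in> I" "a \<le> t"
  shows "phi t \<in> K"
proof -
  have "phi t \<in> U" using assms(1,5) unfolding is_solution_def by blast
  with V_decreasing_along_F[OF assms(1-3,5,6)] V_nonneg assms(4) show ?thesis
    unfolding K_def by auto
qed

lemma exists_solution_from_K:
  assumes "x0 \<in> K"
  obtains phi where "phi 0 = x0" "is_solution U F {0..} phi"
proof -
  obtain \<delta> D where D: "\<delta> > 0" "compact D" "D \<subseteq> U" "\<And>x. x \<in> K \<Longrightarrow> cball x \<delta> \<subseteq> D"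
    using compact_cball_neighbourhood[OF compact_K open_U K_subset] by blast
  obtain L where L: "\<And>C. convex C \<Longrightarrow> C \<subseteq> D \<Longrightarrow> L-lipschitz_on C F"
    using Ck_on_Suc_lipschitz_on_convex[OF open_U smooth_on_imp_Ck_on[OF smooth_F, of "Suc 0"] D(2,3)]
    by blast
  have L0: "L \<ge> 0" using lipschitz_on_nonneg[OF L[OF convex_empty empty_subsetI]] .
  obtain M where M: "M > 0" "\<And>y. y \<in> D \<Longrightarrow> norm (F y) \<le> M"
    using continuous_on_compact_norm_bound[OF smooth_on_imp_continuous_on[OF smooth_F] D(2,3)] by blast
  define h where "h = min (\<delta> / M) (1 / (2 * (L + 1)))"
  have h0: "h > 0" unfolding h_def using D(1) M(1) L0 by auto
  have hM: "M * h \<le> \<delta>"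
    using mult_left_mono[of h "\<delta> / M" M] M(1) unfolding h_def by auto
  have hL: "L * h \<le> 1/2"
  proof -
    have "L * h \<le> L * (1 / (2 * (L + 1)))" unfolding h_def using L0 by (intro mult_left_mono) auto
    also have "\<dots> \<le> 1/2" using L0 by (simp add: field_simps)
    finally show ?thesis .
  qed
  have "\<exists>g. g a = x \<and> is_solution U F {a..a+h} g" if x: "x \<in> K" for x a
  proof -
    obtain g where g: "g a = x" "is_solution (cball x \<delta>) F {a..a+h} g"
      using picard_local[OF L[OF convex_cball D(4)[OF x]] M(2) _ _ hM hL] D(1,4) x h0
      by (metis less_imp_le subsetD)
    have "cball x \<delta> \<subseteq> U" using D(3) D(4)[OF x] by blast
    with g show ?thesis using is_solution_mono by blast
  qed
  moreover have "g (a + h) \<in> K" if "is_solution U F {a..a+h} g" "g a \<in> K" for g a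
    by (rule K_forward_invariant[OF that(1) is_interval_cc _ that(2)]) (use h0 in auto)
  ultimately show ?thesis
    using solution_halfline_of_uniform_local[OF h0 _ _ assms] that by blast
qed

end

section \<open>Convergence to the zero set\<close>

lemma limit_at_cluster_point:
  fixes g :: "'a::t2_space \<Rightarrow> 'b::t2_space"
  assumes "open U" "p \<in> U" "continuous_on U g" "((\<lambda>t. g (phi t)) \<longlongrightarrow> l) at_top"
    and "filterlim s at_top sequentially" "strict_mono r" "(\<lambda>n. phi (s (r n))) \<longlonglongrightarrow> p"
  shows "g p = l"
proof (rule LIMSEQ_unique)
  show "(\<lambda>n. g (phi (s (r n)))) \<longlonglongrightarrow> g p"
  proof -
    have "isCont g p" using assms(1-3) continuous_on_eq_continuous_at by blast
    then show ?thesis using assms(7) by (rule isCont_tendsto_compose)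
  qed
  show "(\<lambda>n. g (phi (s (r n)))) \<longlonglongrightarrow> l"
    using filterlim_compose[OF assms(4) filterlim_compose[OF assms(5) filterlim_subseq[OF assms(6)]]] .
qed

locale lyapunov_trajectory = lyapunov_sublevel +
  fixes phi
  assumes solution: "is_solution U F {0..} phi" and start: "phi 0 \<in> K"
begin

lemma trajectory_in_K: "t \<ge> 0 \<Longrightarrow> phi t \<in> K"
  using K_forward_invariant[OF solution is_interval_ci _ start] by simp

lemma trajectory_in_U: "t \<ge> 0 \<Longrightarrow> phi t \<in> U"
  using trajectory_in_K K_subset by blast

lemma has_real_derivative_along_trajectory:
  fixes w :: "_ \<Rightarrow> real"
  assumes "smooth_on U w" "t \<in> {0..}"
  shows "((\<lambda>t. w (phi t)) has_real_derivative grad w (phi t) \<bullet> F (phi t)) (at t within {0..})"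
proof -
  have "phi t \<in> U" "(phi has_vector_derivative F (phi t)) (at t within {0..})"
    using solution assms(2) unfolding is_solution_def by auto
  moreover from \<open>phi t \<in> U\<close> have "w differentiable (at (phi t))"
    by (rule Ck_on_imp_differentiable_at[OF open_U smooth_on_imp_Ck_on[OF assms(1), of "Suc 0"]])
  ultimately show ?thesis by (intro has_real_derivative_along_curve)
qed

lemma lipschitz_along_trajectory:
  fixes w :: "_ \<Rightarrow> real"
  assumes "smooth_on U w"
  obtains B where "B-lipschitz_on {0..} (\<lambda>t. w (phi t))"
proof -
  obtain G where G: "G > 0" "\<And>y. y \<in> K \<Longrightarrow> norm (grad w y) \<le> G"
    using continuous_on_compact_norm_bound[OF smooth_on_imp_continuous_on[OF smooth_on_grad[OF open_U assms]]
        compact_K K_subset] by blast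
  obtain M where M: "M > 0" "\<And>y. y \<in> K \<Longrightarrow> norm (F y) \<le> M"
    using continuous_on_compact_norm_bound[OF smooth_on_imp_continuous_on[OF smooth_F] compact_K K_subset]
    by blast
  have "\<bar>grad w (phi t) \<bullet> F (phi t)\<bar> \<le> G * M" if "t \<in> {0..}" for t
  proof -
    have "phi t \<in> K" using trajectory_in_K that by simp
    have "\<bar>grad w (phi t) \<bullet> F (phi t)\<bar> \<le> norm (grad w (phi t)) * norm (F (phi t))"
      by (rule Cauchy_Schwarz_ineq2)
    also have "\<dots> \<le> G * M" using G M \<open>phi t \<in> K\<close> by (intro mult_mono) auto
    finally show ?thesis .
  qed
  then have "\<bar>w (phi t) - w (phi s)\<bar> \<le> (G * M) * \<bar>t - s\<bar>" if "s \<in> {0..}" "t \<in> {0..}" for s t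
    using DERIV_bounded_imp_lipschitz_interval[OF is_interval_ci that
        has_real_derivative_along_trajectory[OF assms]] by blast
  then have "(G * M)-lipschitz_on {0..} (\<lambda>t. w (phi t))"
    using G(1) M(1) by (intro lipschitz_onI) (auto simp: dist_real_def)
  then show ?thesis using that by blast
qed

lemma V_convergent: "\<exists>L. ((\<lambda>t. V (phi t)) \<longlongrightarrow> L) at_top"
  using V_decreasing_along_F[OF solution is_interval_ci] V_nonneg trajectory_in_U
  by (intro decreasing_bounded_below_convergent_at_top) auto

lemma derivative_along_trajectory_tendsto_zero:
  fixes w :: "_ \<Rightarrow> real"
  assumes "smooth_on U w" "((\<lambda>t. w (phi t)) \<longlongrightarrow> l) at_top"
  shows "((\<lambda>t. grad w (phi t) \<bullet> F (phi t)) \<longlongrightarrow> 0) at_top"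
proof -
  have "smooth_on U (\<lambda>y. grad w y \<bullet> F y)"
    by (intro smooth_on_inner open_U smooth_on_grad assms(1) smooth_F)
  then obtain B where lip: "B-lipschitz_on {0..} (\<lambda>t. grad w (phi t) \<bullet> F (phi t))"
    by (rule lipschitz_along_trajectory)
  show ?thesis
    by (rule barbalat[OF _ assms(2) lip]) (rule has_real_derivative_along_trajectory[OF assms(1)])
qed

lemma grad_V_tendsto_zero: "((\<lambda>t. grad V (phi t)) \<longlongrightarrow> 0) at_top"
proof -
  obtain L where "((\<lambda>t. V (phi t)) \<longlongrightarrow> L) at_top" using V_convergent by blast
  from derivative_along_trajectory_tendsto_zero[OF smooth_V this]
  have "((\<lambda>t. - (norm (grad V (phi t)))\<^sup>2) \<longlongrightarrow> 0) at_top"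
  proof (rule Lim_transform_eventually)
    show "\<forall>\<^sub>F t in at_top. grad V (phi t) \<bullet> F (phi t) = - (norm (grad V (phi t)))\<^sup>2"
      unfolding eventually_at_top_linorder using trajectory_in_U grad_V_orthogonal
      by (auto simp: F_def inner_diff_right power2_norm_eq_inner)
  qed
  then have "((\<lambda>t. (norm (grad V (phi t)))\<^sup>2) \<longlongrightarrow> 0) at_top"
    using tendsto_minus by force
  then have "((\<lambda>t. sqrt ((norm (grad V (phi t)))\<^sup>2)) \<longlongrightarrow> 0) at_top"
    using tendsto_real_sqrt by force
  then show ?thesis by (simp add: tendsto_norm_zero_iff)
qed

(* X g = grad g . F + grad g . grad V: the first term is the time derivative of g along phi, the
   second is bounded by a multiple of |grad V|. *)
lemma lie_tendsto_zero:
  fixes g :: "_ \<Rightarrow> real"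
  assumes "smooth_on U g" "((\<lambda>t. g (phi t)) \<longlongrightarrow> 0) at_top"
  shows "((\<lambda>t. lie X g (phi t)) \<longlongrightarrow> 0) at_top"
proof -
  obtain G where G: "G > 0" "\<And>y. y \<in> K \<Longrightarrow> norm (grad g y) \<le> G"
    using continuous_on_compact_norm_bound[OF smooth_on_imp_continuous_on[OF smooth_on_grad[OF open_U assms(1)]]
        compact_K K_subset] by blast
  have "((\<lambda>t. grad g (phi t) \<bullet> grad V (phi t)) \<longlongrightarrow> 0) at_top"
  proof (rule Lim_null_comparison)
    show "\<forall>\<^sub>F t in at_top. norm (grad g (phi t) \<bullet> grad V (phi t)) \<le> G * norm (grad V (phi t))"
      unfolding eventually_at_top_linorder
    proof (intro exI allI impI)
      fix t :: real assume "t \<ge> 0"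
      have "norm (grad g (phi t) \<bullet> grad V (phi t)) \<le> norm (grad g (phi t)) * norm (grad V (phi t))"
        unfolding real_norm_def by (rule Cauchy_Schwarz_ineq2)
      also have "\<dots> \<le> G * norm (grad V (phi t))"
        using G(2) trajectory_in_K[OF \<open>t \<ge> 0\<close>] by (intro mult_right_mono) auto
      finally show "norm (grad g (phi t) \<bullet> grad V (phi t)) \<le> G * norm (grad V (phi t))" .
    qed
    show "((\<lambda>t. G * norm (grad V (phi t))) \<longlongrightarrow> 0) at_top"
      using tendsto_mult_right_zero[OF tendsto_norm_zero[OF grad_V_tendsto_zero]] .
  qed
  moreover have "lie X g y = grad g y \<bullet> F y + grad g y \<bullet> grad V y" for y
    by (simp add: lie_def F_def inner_diff_right inner_commute)
  ultimately show ?thesis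
    using tendsto_add_zero[OF derivative_along_trajectory_tendsto_zero[OF assms]] by simp
qed

lemma lie_iter_tendsto_zero:
  fixes g :: "_ \<Rightarrow> real"
  assumes "smooth_on U g" "((\<lambda>t. g (phi t)) \<longlongrightarrow> 0) at_top"
  shows "((\<lambda>t. (lie X ^^ k) g (phi t)) \<longlongrightarrow> 0) at_top"
proof (induction k)
  case (Suc k)
  then show ?case
    using lie_tendsto_zero[OF smooth_on_lie_iter[OF open_U smooth_X assms(1)]] by simp
qed (simp add: assms(2))

lemma pd_V_tendsto_zero: "((\<lambda>t. pd i V (phi t)) \<longlongrightarrow> 0) at_top"
  using tendsto_vec_nth[OF grad_V_tendsto_zero, of i] by (simp add: grad_def)

lemma trajectory_cluster_point:
  fixes s :: "nat \<Rightarrow> real"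
  assumes "\<And>n. 0 \<le> s n"
  obtains p r where "p \<in> K" "strict_mono r" "(\<lambda>n. phi (s (r n))) \<longlonglongrightarrow> p"
proof -
  have "\<forall>n. phi (s n) \<in> K" using trajectory_in_K assms by blast
  obtain p r where "p \<in> K" "strict_mono r" "((\<lambda>n. phi (s n)) \<circ> r) \<longlonglongrightarrow> p"
    by (rule seq_compactE[OF compact_imp_seq_compact[OF compact_K] \<open>\<forall>n. phi (s n) \<in> K\<close>])
  then show ?thesis using that by (simp add: o_def)
qed

lemma V_tendsto_zero: "((\<lambda>t. V (phi t)) \<longlongrightarrow> 0) at_top"
proof -
  obtain L where L: "((\<lambda>t. V (phi t)) \<longlongrightarrow> L) at_top" using V_convergent by blast
  obtain p r where p: "p \<in> K" "strict_mono r" "(\<lambda>n. phi (real (r n))) \<longlonglongrightarrow> p"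
    by (rule trajectory_cluster_point[OF of_nat_0_le_iff])
  have pU: "p \<in> U" using p(1) K_subset by blast
  have lim: "g p = l" if "continuous_on U g" "((\<lambda>t. g (phi t)) \<longlongrightarrow> l) at_top" for g and l :: real
    by (rule limit_at_cluster_point[OF open_U pU that filterlim_real_sequentially p(2,3)])
  have "(lie X ^^ k) (pd i V) p = 0" for k i
  proof (rule lim)
    show "continuous_on U ((lie X ^^ k) (pd i V))"
      by (rule smooth_on_imp_continuous_on[OF smooth_on_lie_iter[OF open_U smooth_X smooth_on_pd[OF smooth_V]]])
    show "((\<lambda>t. (lie X ^^ k) (pd i V) (phi t)) \<longlongrightarrow> 0) at_top"
      by (rule lie_iter_tendsto_zero[OF smooth_on_pd[OF smooth_V] pd_V_tendsto_zero])
  qed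
  then have "p \<in> S_set U X V" using p K_subset unfolding S_set_def by auto
  then have "V p = 0" using S_set_sublevel p unfolding K_def by blast
  moreover have "V p = L" using lim[OF smooth_on_imp_continuous_on[OF smooth_V] L] .
  ultimately show ?thesis using L by simp
qed

lemma infdist_tendsto_zero: "((\<lambda>t. infdist (phi t) {x\<in>U. V x = 0}) \<longlongrightarrow> 0) at_top"
proof (rule ccontr)
  let ?Z = "{x\<in>U. V x = 0}"
  assume "\<not> ?thesis"
  then obtain \<epsilon> where "\<epsilon> > 0" and "\<forall>n. \<exists>t\<ge>real n. infdist (phi t) ?Z \<ge> \<epsilon>"
    unfolding tendsto_iff eventually_at_top_linorder by (auto simp: not_less infdist_nonneg)
  then obtain s where "\<forall>n. s n \<ge> real n \<and> infdist (phi (s n)) ?Z \<ge> \<epsilon>"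
    by (auto dest: choice)
  then have s: "\<And>n. s n \<ge> real n" "\<And>n. infdist (phi (s n)) ?Z \<ge> \<epsilon>" by auto
  have s0: "0 \<le> s n" for n using s(1)[of n] of_nat_0_le_iff[of n] by linarith
  have "filterlim s at_top sequentially"
    by (rule filterlim_at_top_mono[OF filterlim_real_sequentially]) (use s(1) in \<open>auto intro: always_eventually\<close>)
  obtain p r where p: "p \<in> K" "strict_mono r" "(\<lambda>n. phi (s (r n))) \<longlonglongrightarrow> p"
    by (rule trajectory_cluster_point[OF s0])
  have pU: "p \<in> U" using p(1) K_subset by blast
  have "V p = 0"
    by (rule limit_at_cluster_point[OF open_U pU smooth_on_imp_continuous_on[OF smooth_V] V_tendsto_zero
          \<open>filterlim s at_top sequentially\<close> p(2,3)])
  then have "(\<lambda>n. infdist (phi (s (r n))) ?Z) \<longlonglongrightarrow> 0"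
    using tendsto_infdist[OF p(3), of ?Z] p(1) K_subset by auto
  then have "\<epsilon> \<le> 0" by (rule LIMSEQ_le_const) (use s(2) in blast)
  with \<open>\<epsilon> > 0\<close> show False by simp
qed

end

theorem theorem2:
  fixes U :: "(real^'n) set" and X :: "real^'n \<Rightarrow> real^'n" and V :: "real^'n \<Rightarrow> real" and c :: real
  assumes "open U"
    and "smooth_on U X" and "smooth_on U V"
    and A1: "\<forall>x\<in>U. V x \<ge> 0" "{x\<in>U. V x = 0} \<noteq> {}" "\<forall>x\<in>U. grad V x \<bullet> X x = 0"
    and A2: "c > 0" "compact {x\<in>U. V x \<in> {0..c}}"
    and A3': "S_set U X V \<inter> {x\<in>U. V x \<in> {0..c}} \<subseteq> {x\<in>U. V x = 0}"
  shows "(\<forall>x0\<in>{x\<in>U. V x \<in> {0..c}}. \<exists>phi. phi 0 = x0 \<and> is_solution U (\<lambda>x. X x - grad V x) {0..} phi)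
      \<and> (\<forall>phi T. is_solution U (\<lambda>x. X x - grad V x) {0..T} phi \<and> phi 0 \<in> {x\<in>U. V x \<in> {0..c}}
            \<longrightarrow> (\<forall>t\<in>{0..T}. phi t \<in> {x\<in>U. V x \<in> {0..c}}))
      \<and> (\<forall>phi. is_solution U (\<lambda>x. X x - grad V x) {0..} phi \<and> phi 0 \<in> {x\<in>U. V x \<in> {0..c}}
            \<longrightarrow> (\<forall>t\<ge>0. phi t \<in> {x\<in>U. V x \<in> {0..c}})
              \<and> ((\<lambda>t. infdist (phi t) {x\<in>U. V x = 0}) \<longlongrightarrow> 0) at_top)
      \<and> invariant_set U X {x\<in>U. V x = 0}
      \<and> invariant_set U (\<lambda>x. X x - grad V x) {x\<in>U. V x = 0}"
proof -
  interpret lyapunov_sublevel U X V c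
    by unfold_locales (use assms in auto)
  have F: "(\<lambda>x. X x - grad V x) = F" by (simp add: F_def[abs_def])
  have K: "{x\<in>U. V x \<in> {0..c}} = K" by (simp add: K_def)
  have "\<exists>phi. phi 0 = x0 \<and> is_solution U F {0..} phi" if "x0 \<in> K" for x0
    using exists_solution_from_K[OF that] by metis
  moreover have "\<forall>t\<in>{0..T}. phi t \<in> K" if "is_solution U F {0..T} phi" "phi 0 \<in> K" for phi T
    using K_forward_invariant[OF that(1) is_interval_cc _ that(2)] by auto
  moreover have "(\<forall>t\<ge>0. phi t \<in> K) \<and> ((\<lambda>t. infdist (phi t) {x\<in>U. V x = 0}) \<longlongrightarrow> 0) at_top"
    if "is_solution U F {0..} phi" "phi 0 \<in> K" for phi
  proof -
    interpret lyapunov_trajectory U X V c phi by unfold_locales (rule that)+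
    show ?thesis using trajectory_in_K infdist_tendsto_zero by blast
  qed
  ultimately show ?thesis unfolding F K using invariant_zero_set_X invariant_zero_set_F by blast
qed

end
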